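(* Fix $(\sigma_s,\mu)\in\mathbb{R}^2$ and $\delta\in(0,1/8)$. For $-1/2<\operatorname{Im} t<1/2$ let $$f(t) = -\frac{\operatorname{Li}_2(-e^{2 \pi \mu }) + \operatorname{Li}_2(-e^{2 \pi (t-\sigma_s)}) + \operatorname{Li}_2(-e^{2 \pi(t+\sigma_s)})}{2 \pi i}+2 i \pi \mu t+\pi (t - \mu) +\frac{5 i \pi }{12},\qquad g(t) = e^{\pi (t- \mu)}.$$ Writing $t=t_1+it_2$, there are constants $C>0$ and $c>0$ such that $$\big|e^{f(t)/b^2} g(t)\big| \leq C e^{-\frac{c}{b^2}|t_1|}$$ for all sufficiently large $|t_1|$, all $t_2\in(-1/2,-1/4-\delta)$, and all sufficiently small $b>0$.
   Context: $\operatorname{Li}_2(z)=-\int_0^z\frac{\ln(1-u)}{u}du$ on $\mathbb{C}\setminus[1,\infty)$, with the principal logarithm. *)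

theory Defs
  imports "HOL-Complex_Analysis.Complex_Analysis"
begin

text \<open>Dilogarithm on the cut plane C minus [1,oo): Li2 z = - integral_0^z Ln(1-u)/u du,
  integrated along the straight segment from 0 to z (the cut plane is star-shaped
  with respect to 0, so this is the principal branch). Ln is the principal logarithm.\<close>
definition Li2 :: "complex \<Rightarrow> complex" where
  "Li2 z = - contour_integral (linepath 0 z) (\<lambda>u. Ln (1 - u) / u)"

definition f51 :: "real \<Rightarrow> real \<Rightarrow> complex \<Rightarrow> complex" where
  "f51 \<sigma> \<mu> t =
     - (Li2 (- exp (complex_of_real (2 * pi * \<mu>)))
        + Li2 (- exp (2 * complex_of_real pi * (t - complex_of_real \<sigma>)))
        + Li2 (- exp (2 * complex_of_real pi * (t + complex_of_real \<sigma>))))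
       / (2 * complex_of_real pi * \<i>)
     + 2 * \<i> * complex_of_real pi * complex_of_real \<mu> * t
     + complex_of_real pi * (t - complex_of_real \<mu>)
     + 5 * \<i> * complex_of_real pi / 12"

definition g51 :: "real \<Rightarrow> complex \<Rightarrow> complex" where
  "g51 \<mu> t = exp (complex_of_real pi * (t - complex_of_real \<mu>))"

end

theory Submission
  imports Defs
begin

text \<open>The modulus of \<open>exp (f/b\<^sup>2) g\<close> at \<open>t = t1 + i t2\<close> is \<open>exp (Re f / b\<^sup>2 + \<pi> (t1 - \<mu>))\<close>,
  and \<open>Re f\<close> is controlled by \<open>Im Li2 (- exp w)\<close> on the line \<open>Im w = 2 \<pi> t2\<close>. For
  \<open>Re w \<le> -1\<close> this is bounded, because \<open>|Li2 z| \<le> 2 |z|\<close> for \<open>|z| < 1/2\<close>. As a function of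
  \<open>Re w\<close> its derivative is \<open>- Im Ln (1 + exp w) = - Im w - Im Ln (1 + exp (- w))\<close>, and the
  last term is \<open>O (exp (- Re w))\<close>, so it grows at least like \<open>- Im w * Re w\<close>. This gives
  \<open>Re f \<le> K + \<pi> t1 (1 + 4 t2)\<close> for large positive \<open>t1\<close> and \<open>Re f \<le> K + \<pi> t1\<close> for large
  negative \<open>t1\<close>; both are \<open>\<le> K - 4 \<pi> \<delta> |t1|\<close> when \<open>t2 < -1/4 - \<delta>\<close>, which dominates the
  growth of \<open>g\<close> as soon as \<open>b\<^sup>2 \<le> \<delta>\<close>.\<close>

definition cut_plane :: "complex set" where
  "cut_plane = {z. Im z \<noteq> 0 \<or> Re z < 1}"

lemma open_cut_plane: "open cut_plane"
proof -
  have "cut_plane = {z. Im z < 0} \<union> {z. Im z > 0} \<union> {z. Re z < 1}"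
    unfolding cut_plane_def by auto
  moreover have "open {z. Im z < 0}" "open {z. Im z > 0}" "open {z. Re z < 1}"
    by (auto intro!: open_Collect_less continuous_intros)
  ultimately show ?thesis by (metis open_Un)
qed

lemma one_minus_cut_plane_notin_nonpos_Reals: "z \<in> cut_plane \<Longrightarrow> 1 - z \<notin> \<real>\<^sub>\<le>\<^sub>0"
  unfolding cut_plane_def by (auto simp: complex_nonpos_Reals_iff)

lemma scaleR_in_cut_plane:
  assumes "z \<in> cut_plane" "0 \<le> u" "u \<le> 1"
  shows "u *\<^sub>R z \<in> cut_plane"
proof (cases "u = 0")
  case False
  then have "u * Re z < 1" if "Re z < 1"
    using assms that by (smt (verit) mult_le_cancel_left1 mult_nonneg_nonpos)
  then show ?thesis using assms False by (auto simp: cut_plane_def)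
qed (simp add: cut_plane_def)

lemma closed_segment_0_subset_cut_plane: "closed_segment 0 z \<subseteq> cut_plane" if "z \<in> cut_plane"
  using that scaleR_in_cut_plane by (auto simp: closed_segment_def)

definition dilog_integrand :: "complex \<Rightarrow> complex" where
  "dilog_integrand u = (if u = 0 then -1 else Ln (1 - u) / u)"

lemma isCont_dilog_integrand_0: "isCont dilog_integrand 0"
proof -
  have "((\<lambda>x. Ln (1 - x)) has_field_derivative inverse (1 - 0) * (-1)) (at 0)"
    by (rule DERIV_chain2[where f=Ln]) (auto intro!: has_field_derivative_Ln derivative_eq_intros)
  then have "((\<lambda>u. Ln (1 - u) / u) \<longlongrightarrow> -1) (at 0)"
    by (simp add: has_field_derivative_iff)
  then have "(dilog_integrand \<longlongrightarrow> -1) (at 0)"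
    by (rule tendsto_cong[THEN iffD1, rotated]) (auto simp: dilog_integrand_def eventually_at_filter)
  then show ?thesis by (simp add: isCont_def dilog_integrand_def)
qed

lemma dilog_integrand_field_differentiable:
  assumes "z \<in> cut_plane" "z \<noteq> 0"
  shows "dilog_integrand field_differentiable at z"
proof -
  define D where "D = (- inverse (1 - z) * z - Ln (1 - z)) / z^2"
  have "((\<lambda>u. Ln (1 - u) / u) has_field_derivative D) (at z)"
    using assms one_minus_cut_plane_notin_nonpos_Reals[OF assms(1)] unfolding D_def
    by (auto intro!: derivative_eq_intros DERIV_chain2[where f=Ln] has_field_derivative_Ln
             simp: power2_eq_square field_simps)
  then have "(dilog_integrand has_field_derivative D) (at z)"
    by (rule has_field_derivative_transform_within_open[where S="cut_plane - {0}"])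
       (use assms open_cut_plane in \<open>auto simp: dilog_integrand_def open_Diff\<close>)
  then show ?thesis by (auto simp: field_differentiable_def)
qed

lemma continuous_on_dilog_integrand: "continuous_on cut_plane dilog_integrand"
proof -
  have "isCont dilog_integrand z" if "z \<in> cut_plane" for z
    using that isCont_dilog_integrand_0 dilog_integrand_field_differentiable
      field_differentiable_imp_continuous_at by (cases "z = 0") auto
  then show ?thesis by (simp add: continuous_at_imp_continuous_on)
qed

lemma contour_integral_linepath_has_field_derivative:
  fixes f :: "complex \<Rightarrow> complex"
  assumes "continuous_on S f" "open S" "a \<in> S" "\<And>y. y \<in> S \<Longrightarrow> closed_segment a y \<subseteq> S"
    and "finite K" "\<And>x. x \<in> S - K \<Longrightarrow> f field_differentiable at x" and "x \<in> S"
  shows "((\<lambda>x. contour_integral (linepath a x) f) has_field_derivative f x) (at x)"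
proof (rule triangle_contour_integrals_starlike_primitive[OF assms(1,3,2,7,4)])
  fix b c assume "closed_segment b c \<subseteq> S"
  then have "convex hull {a, b, c} \<subseteq> S"
    using assms(3,4) by (simp add: starlike_convex_subset)
  then have "(f has_contour_integral 0) (linepath a b +++ linepath b c +++ linepath c a)"
    using assms(1,6) interior_subset
    by (force intro: Cauchy_theorem_triangle_cofinite[OF _ assms(5)] continuous_on_subset)
  then show "contour_integral (linepath a b) f + contour_integral (linepath b c) f +
             contour_integral (linepath c a) f = 0"
    by (rule has_chain_integral_chain_integral3)
qed

lemma Li2_eq_contour_integral_dilog_integrand:
  "Li2 z = - contour_integral (linepath 0 z) dilog_integrand"
proof (cases "z = 0")
  case False
  have "contour_integral (linepath 0 z) (\<lambda>u. Ln (1 - u) / u) =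
        contour_integral (linepath 0 z) dilog_integrand"
    by (rule contour_integral_spike_finite_simple_path[of "{0}"])
       (use False in \<open>auto simp: dilog_integrand_def\<close>)
  then show ?thesis by (simp add: Li2_def)
qed (simp add: Li2_def)

lemma has_field_derivative_Li2:
  assumes "z \<in> cut_plane" "z \<noteq> 0"
  shows "(Li2 has_field_derivative - (Ln (1 - z) / z)) (at z)"
proof -
  have "((\<lambda>z. contour_integral (linepath 0 z) dilog_integrand) has_field_derivative
          dilog_integrand z) (at z)"
    by (rule contour_integral_linepath_has_field_derivative[where K="{0}"])
       (use assms open_cut_plane continuous_on_dilog_integrand closed_segment_0_subset_cut_plane
          dilog_integrand_field_differentiable in \<open>auto simp: cut_plane_def\<close>)
  from DERIV_minus[OF this] show ?thesis
    using assms by (simp add: Li2_eq_contour_integral_dilog_integrand[abs_def] dilog_integrand_def)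
qed

lemma norm_Li2_le:
  assumes "norm z < 1/2"
  shows "norm (Li2 z) \<le> 2 * norm z"
proof -
  have "z \<in> cut_plane"
    using assms complex_Re_le_cmod[of z] by (auto simp: cut_plane_def)
  then have "dilog_integrand contour_integrable_on linepath 0 z"
    by (meson contour_integrable_continuous_linepath continuous_on_subset
          continuous_on_dilog_integrand closed_segment_0_subset_cut_plane)
  moreover have "norm (dilog_integrand u) \<le> 2" if "u \<in> closed_segment 0 z" for u
  proof (cases "u = 0")
    case False
    have "norm (Ln (1 + (- u))) \<le> 2 * norm (- u)"
      using segment_bound1[OF that] assms by (intro norm_Ln_le) auto
    then show ?thesis using False by (simp add: dilog_integrand_def norm_divide divide_le_eq)
  qed (simp add: dilog_integrand_def)
  ultimately have "norm (contour_integral (linepath 0 z) dilog_integrand) \<le> 2 * norm (z - 0)"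
    by (intro contour_integral_bound_linepath) auto
  then show ?thesis by (simp add: Li2_eq_contour_integral_dilog_integrand)
qed

lemma has_real_derivative_Im_Li2_neg_exp:
  assumes "sin \<theta> \<noteq> 0"
  shows "((\<lambda>s. Im (Li2 (- exp (Complex s \<theta>)))) has_real_derivative
           - Im (Ln (1 + exp (Complex s \<theta>)))) (at s)"
proof -
  let ?w = "\<lambda>z. z + \<i> * of_real \<theta>"
  have w: "?w (of_real x) = Complex x \<theta>" for x by (simp add: complex_eq_iff)
  have "- exp (Complex s \<theta>) \<in> cut_plane"
    using assms by (simp add: cut_plane_def Im_exp)
  then have "(Li2 has_field_derivative - (Ln (1 + exp (Complex s \<theta>)) / - exp (Complex s \<theta>)))
               (at (- exp (?w (of_real s))))"
    by (auto simp: w dest: has_field_derivative_Li2)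
  moreover have "((\<lambda>z. - exp (?w z)) has_field_derivative - exp (Complex s \<theta>)) (at (of_real s))"
    by (auto simp: w intro!: derivative_eq_intros)
  ultimately have "((\<lambda>z. Li2 (- exp (?w z))) has_field_derivative - Ln (1 + exp (Complex s \<theta>)))
                     (at (of_real s))"
    by (auto dest: DERIV_chain2)
  then have "((\<lambda>x. Li2 (- exp (Complex x \<theta>))) has_vector_derivative - Ln (1 + exp (Complex s \<theta>))) (at s)"
    by (auto simp: w dest: has_vector_derivative_real_field)
  then show ?thesis by (auto dest: has_field_derivative_Im)
qed

lemma Ln_one_plus_exp_neg_bounds:
  assumes "-pi < Im w" "Im w < 0"
  shows "1 + exp (- w) \<noteq> 0" "0 < Im (Ln (1 + exp (- w)))" "Im (Ln (1 + exp (- w))) < pi"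
proof -
  have pos: "0 < Im (1 + exp (- w))"
    using assms sin_gt_zero[of "- Im w"] by (simp add: Im_exp mult_pos_neg)
  then show "1 + exp (- w) \<noteq> 0"
    by (metis less_irrefl zero_complex.sel(2))
  show "0 < Im (Ln (1 + exp (- w)))" "Im (Ln (1 + exp (- w))) < pi"
    using Im_Ln_pos_lt_imp[OF pos] by auto
qed

lemma Ln_one_plus_exp:
  assumes "-pi < Im w" "Im w < 0"
  shows "Ln (1 + exp w) = w + Ln (1 + exp (- w))"
proof -
  have "1 + exp w = exp w * (1 + exp (- w))"
    by (simp add: distrib_left exp_minus)
  then show ?thesis
    using assms Ln_one_plus_exp_neg_bounds[OF assms] by (simp add: Ln_times_simple)
qed

lemma norm_Li2_neg_exp_le:
  assumes "Re w \<le> -1"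
  shows "norm (Li2 (- exp w)) \<le> 1"
proof -
  have "3/2 \<le> exp (1/2::real)"
    using exp_ge_add_one_self[of "1/2::real"] by simp
  then have "(3/2) * (3/2) \<le> exp (1/2::real) * exp (1/2)"
    by (intro mult_mono) auto
  then have "exp (-1::real) < 1/2"
    by (simp add: exp_minus field_simps flip: exp_add)
  then have "exp (Re w) < 1/2"
    using assms by (meson exp_le_cancel_iff order_le_less_trans)
  then have "norm (- exp w) < 1/2"
    by (simp add: norm_exp_eq_Re)
  from norm_Li2_le[OF this] show ?thesis
    using \<open>norm (- exp w) < 1/2\<close> by simp
qed

text \<open>The constant 9 covers both the bound \<open>2 exp (- Re w)\<close> for \<open>exp (- Re w) < 1/2\<close> and the
  bound \<open>\<pi>\<close> otherwise.\<close>

lemma Im_Ln_one_plus_exp_neg_le: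
  assumes "-pi < Im w" "Im w < 0"
  shows "Im (Ln (1 + exp (- w))) \<le> 9 * exp (- Re w)"
proof (cases "exp (- Re w) < 1/2")
  case True
  have "Im (Ln (1 + exp (- w))) \<le> norm (Ln (1 + exp (- w)))"
    using abs_Im_le_cmod abs_ge_self order_trans by blast
  also have "\<dots> \<le> 2 * exp (- Re w)"
    using norm_Ln_le[of "exp (- w)"] True by (simp add: norm_exp_eq_Re)
  finally show ?thesis
    using exp_gt_zero[of "- Re w"] by linarith
next
  case False
  have "Im (Ln (1 + exp (- w))) < pi"
    using Ln_one_plus_exp_neg_bounds[OF assms] by simp
  then show ?thesis using False pi_less_4 by linarith
qed

lemma Im_Li2_neg_exp_ge:
  assumes "-pi < \<theta>" "\<theta> < 0" "-1 \<le> s"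
  shows "Im (Li2 (- exp (Complex s \<theta>))) \<ge> - \<theta> * s - 28"
proof -
  define q where "q x = Im (Li2 (- exp (Complex x \<theta>)))" for x
  define \<psi> where "\<psi> x = q x + \<theta> * x - 9 * exp (- x)" for x
  have "\<psi> (-1) \<le> \<psi> s"
  proof (rule DERIV_nonneg_imp_nondecreasing[OF assms(3)])
    fix x
    have "sin \<theta> \<noteq> 0"
      using assms sin_gt_zero[of "- \<theta>"] by auto
    then have "(q has_real_derivative - Im (Ln (1 + exp (Complex x \<theta>)))) (at x)"
      unfolding q_def by (rule has_real_derivative_Im_Li2_neg_exp)
    then have "(\<psi> has_real_derivative
                 - Im (Ln (1 + exp (Complex x \<theta>))) + \<theta> + 9 * exp (- x)) (at x)"
      unfolding \<psi>_def by (auto intro!: derivative_eq_intros)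
    moreover have "- Im (Ln (1 + exp (Complex x \<theta>))) + \<theta> + 9 * exp (- x) =
                   9 * exp (- x) - Im (Ln (1 + exp (- Complex x \<theta>)))"
      using assms by (simp add: Ln_one_plus_exp)
    moreover have "Im (Ln (1 + exp (- Complex x \<theta>))) \<le> 9 * exp (- x)"
      using assms Im_Ln_one_plus_exp_neg_le[of "Complex x \<theta>"] by simp
    ultimately show "\<exists>y. (\<psi> has_real_derivative y) (at x) \<and> 0 \<le> y"
      by auto
  qed
  moreover have "q (-1) \<ge> -1"
    using norm_Li2_neg_exp_le[of "Complex (-1) \<theta>"] abs_Im_le_cmod[of "Li2 (- exp (Complex (-1) \<theta>))"]
    by (simp add: q_def)
  moreover have "exp (1::real) \<le> 3"
    by (rule exp_le)
  ultimately show ?thesis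
    using assms exp_gt_zero[of "- s"] unfolding \<psi>_def q_def
    by (simp only: minus_minus mult_minus_left mult_minus_right)
qed

lemma Re_f51:
  "Re (f51 \<sigma> \<mu> (Complex t1 t2)) =
     - (Im (Li2 (- exp (complex_of_real (2 * pi * \<mu>))))
        + Im (Li2 (- exp (Complex (2*pi*(t1-\<sigma>)) (2*pi*t2))))
        + Im (Li2 (- exp (Complex (2*pi*(t1+\<sigma>)) (2*pi*t2))))) / (2*pi)
     - 2*pi*\<mu>*t2 + pi*(t1 - \<mu>)"
proof -
  have "2 * complex_of_real pi * (Complex t1 t2 - complex_of_real \<sigma>) = Complex (2*pi*(t1-\<sigma>)) (2*pi*t2)"
       "2 * complex_of_real pi * (Complex t1 t2 + complex_of_real \<sigma>) = Complex (2*pi*(t1+\<sigma>)) (2*pi*t2)"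
    by (simp_all add: complex_eq_iff)
  moreover have "Re (x / (2 * complex_of_real pi * \<i>)) = Im x / (2*pi)" for x
  proof -
    have "x / (2 * complex_of_real pi * \<i>) = - \<i> * x / complex_of_real (2*pi)"
      by (simp add: field_simps)
    then show ?thesis by (simp add: Re_divide_of_real)
  qed
  ultimately show ?thesis
    unfolding f51_def by (simp add: algebra_simps)
qed

lemma Re_f51_le:
  assumes "\<bar>t2\<bar> \<le> 1/2"
  shows "Re (f51 \<sigma> \<mu> (Complex t1 t2)) \<le>
           \<bar>Im (Li2 (- exp (complex_of_real (2 * pi * \<mu>))))\<bar> / (2*pi) + 2*pi*\<bar>\<mu>\<bar> + pi*t1
           - (Im (Li2 (- exp (Complex (2*pi*(t1-\<sigma>)) (2*pi*t2))))
              + Im (Li2 (- exp (Complex (2*pi*(t1+\<sigma>)) (2*pi*t2))))) / (2*pi)"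
    (is "_ \<le> \<bar>?A\<bar> / _ + _ + _ - (?B + ?C) / _")
proof -
  have "\<bar>2*pi*\<mu>*t2\<bar> = pi*\<bar>\<mu>\<bar> * (2*\<bar>t2\<bar>)"
    by (simp add: abs_mult)
  also have "\<dots> \<le> pi*\<bar>\<mu>\<bar>"
    using assms by (intro mult_left_le) auto
  finally have "- (2*pi*\<mu>*t2) - pi*\<mu> \<le> 2*pi*\<bar>\<mu>\<bar>"
    using pi_gt_zero abs_ge_minus_self[of "2*pi*\<mu>*t2"] mult_left_mono[OF abs_ge_minus_self[of \<mu>], of pi]
    by linarith
  moreover have "- ?A / (2*pi) \<le> \<bar>?A\<bar> / (2*pi)"
    by (intro divide_right_mono) auto
  moreover have "Re (f51 \<sigma> \<mu> (Complex t1 t2)) =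
                 - ?A / (2*pi) - (?B + ?C) / (2*pi) - 2*pi*\<mu>*t2 - pi*\<mu> + pi*t1"
    unfolding Re_f51 by (simp add: diff_divide_distrib add_divide_distrib right_diff_distrib)
  ultimately show ?thesis
    by linarith
qed

lemma Re_f51_le_linear:
  assumes "0 < \<delta>" "\<delta> < 1/8"
  obtains K where
    "\<And>t1 t2. \<bar>\<sigma>\<bar> + 1 \<le> \<bar>t1\<bar> \<Longrightarrow> -1/2 < t2 \<Longrightarrow> t2 < -1/4 - \<delta> \<Longrightarrow>
       Re (f51 \<sigma> \<mu> (Complex t1 t2)) \<le> K - 4*pi*\<delta>*\<bar>t1\<bar>"
proof
  define K where "K = \<bar>Im (Li2 (- exp (complex_of_real (2 * pi * \<mu>))))\<bar> / (2*pi) + 2*pi*\<bar>\<mu>\<bar> + 28/pi"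
  fix t1 t2 :: real
  assume t1: "\<bar>\<sigma>\<bar> + 1 \<le> \<bar>t1\<bar>" and t2: "-1/2 < t2" "t2 < -1/4 - \<delta>"
  define L where "L = (\<lambda>x. Im (Li2 (- exp (Complex (2*pi*x) (2*pi*t2)))))"
  have "Re (f51 \<sigma> \<mu> (Complex t1 t2)) \<le> K - 28/pi + pi*t1 - (L (t1-\<sigma>) + L (t1+\<sigma>)) / (2*pi)"
    using Re_f51_le[of t2 \<sigma> \<mu> t1] t2 assms by (simp add: K_def L_def)
  moreover have "pi*t1 - (L (t1-\<sigma>) + L (t1+\<sigma>)) / (2*pi) \<le> 28/pi - 4*pi*\<delta>*\<bar>t1\<bar>"
  proof (cases "t1 \<ge> 0")
    case True
    have "pi * (-1) < pi * (2*t2)" "pi * (2*t2) < pi * 0"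
      using t2 assms by (intro mult_strict_left_mono; simp)+
    then have "-pi < 2*pi*t2" "2*pi*t2 < 0"
      by simp_all
    moreover have "-1 \<le> 2*pi*(t1-\<sigma>)" "-1 \<le> 2*pi*(t1+\<sigma>)"
      using t1 True by (auto intro: order_trans[of _ 0])
    ultimately have "(- (2*pi*t2) * (2*pi*(t1-\<sigma>)) - 28) + (- (2*pi*t2) * (2*pi*(t1+\<sigma>)) - 28)
                     \<le> L (t1-\<sigma>) + L (t1+\<sigma>)"
      unfolding L_def by (intro add_mono Im_Li2_neg_exp_ge)
    then have "- (L (t1-\<sigma>) + L (t1+\<sigma>)) \<le> 8*pi^2*t1*t2 + 56"
      by (simp add: algebra_simps power2_eq_square)
    then have "- (L (t1-\<sigma>) + L (t1+\<sigma>)) / (2*pi) \<le> (8*pi^2*t1*t2 + 56) / (2*pi)"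
      by (intro divide_right_mono) auto
    also have "\<dots> = 4*pi*t1*t2 + 28/pi"
      by (simp add: field_simps power2_eq_square)
    finally have "- (L (t1-\<sigma>) + L (t1+\<sigma>)) / (2*pi) \<le> 4*pi*t1*t2 + 28/pi" .
    moreover have "pi*t1*(1 + 4*t2) \<le> pi*t1*(-4*\<delta>)"
      using True t2 by (intro mult_left_mono) auto
    then have "pi*t1 + 4*pi*t1*t2 \<le> - 4*pi*\<delta>*\<bar>t1\<bar>"
      using True by (simp add: algebra_simps)
    ultimately show ?thesis
      by linarith
  next
    case False
    have "t1-\<sigma> \<le> -1" "t1+\<sigma> \<le> -1"
      using t1 False by linarith+
    then have "2*pi*(t1-\<sigma>) \<le> 2*pi*(-1)" "2*pi*(t1+\<sigma>) \<le> 2*pi*(-1)"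
      by (intro mult_left_mono; simp)+
    then have "2*pi*(t1-\<sigma>) \<le> -1" "2*pi*(t1+\<sigma>) \<le> -1"
      using pi_ge_two by linarith+
    then have "\<bar>L (t1-\<sigma>)\<bar> \<le> 1" "\<bar>L (t1+\<sigma>)\<bar> \<le> 1"
      unfolding L_def by (auto intro: order_trans[OF abs_Im_le_cmod norm_Li2_neg_exp_le])
    then have "- (L (t1-\<sigma>) + L (t1+\<sigma>)) / (2*pi) \<le> 56 / (2*pi)"
      by (intro divide_right_mono) auto
    then have "- (L (t1-\<sigma>) + L (t1+\<sigma>)) / (2*pi) \<le> 28/pi"
      by simp
    moreover have "pi*t1 \<le> - 4*pi*\<delta>*\<bar>t1\<bar>"
      using False assms by (simp add: mult_le_0_iff)
    ultimately show ?thesis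
      by linarith
  qed
  ultimately show "Re (f51 \<sigma> \<mu> (Complex t1 t2)) \<le> K - 4*pi*\<delta>*\<bar>t1\<bar>"
    by linarith
qed

lemma norm_exp_div_mult_g51:
  "norm (exp (z / complex_of_real (b^2)) * g51 \<mu> (Complex t1 t2)) = exp (Re z / b^2 + pi * (t1 - \<mu>))"
  by (simp add: g51_def norm_mult norm_exp_eq_Re Re_divide_of_real exp_add)

theorem lemma5p1:
  fixes \<sigma> \<mu> \<delta> :: real
  assumes "0 < \<delta>" and "\<delta> < 1/8"
  shows "\<exists>C c. C > 0 \<and> c > 0 \<and> (\<exists>T b0. b0 > 0 \<and>
           (\<forall>t1 t2 b. T \<le> \<bar>t1\<bar> \<longrightarrow> -1/2 < t2 \<longrightarrow> t2 < -1/4 - \<delta> \<longrightarrow> 0 < b \<longrightarrow> b < b0 \<longrightarrow>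
              norm (exp (f51 \<sigma> \<mu> (Complex t1 t2) / complex_of_real (b^2)) * g51 \<mu> (Complex t1 t2))
                \<le> C * exp (- (c / b^2) * \<bar>t1\<bar>)))"
proof -
  obtain K where K: "\<And>t1 t2. \<bar>\<sigma>\<bar> + 1 \<le> \<bar>t1\<bar> \<Longrightarrow> -1/2 < t2 \<Longrightarrow> t2 < -1/4 - \<delta> \<Longrightarrow>
                        Re (f51 \<sigma> \<mu> (Complex t1 t2)) \<le> K - 4*pi*\<delta>*\<bar>t1\<bar>"
    using Re_f51_le_linear[OF assms] by blast
  show ?thesis
  proof (intro exI conjI allI impI)
    fix t1 t2 b :: real
    assume t1: "max (\<bar>\<sigma>\<bar> + 1) (\<bar>K\<bar> / (pi*\<delta>)) \<le> \<bar>t1\<bar>"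
      and t2: "-1/2 < t2" "t2 < -1/4 - \<delta>" and b: "0 < b" "b < \<delta>"
    define X where "X = pi*\<delta>*\<bar>t1\<bar>"
    have "\<bar>\<sigma>\<bar> + 1 \<le> \<bar>t1\<bar>"
      using t1 by simp
    from K[OF this t2] have "Re (f51 \<sigma> \<mu> (Complex t1 t2)) \<le> K - 4*X"
      by (simp add: X_def mult.assoc)
    moreover have "\<bar>K\<bar> \<le> X"
      using t1 assms by (simp add: X_def field_simps)
    then have "K \<le> X"
      by linarith
    moreover have "b^2 \<le> \<delta>"
    proof -
      have "b^2 \<le> \<delta>^2"
        using b by (intro power_mono) auto
      also have "\<dots> \<le> \<delta>"
        using assms by (simp add: power2_eq_square mult_left_le)
      finally show ?thesis .
    qed
    then have "pi*t1*b^2 \<le> X"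
    proof -
      have "pi*t1*b^2 \<le> pi*\<bar>t1\<bar>*b^2"
        by (intro mult_right_mono mult_left_mono) auto
      also have "\<dots> \<le> pi*\<bar>t1\<bar>*\<delta>"
        using \<open>b^2 \<le> \<delta>\<close> by (intro mult_left_mono) auto
      finally show ?thesis
        by (simp add: X_def ac_simps)
    qed
    ultimately have "Re (f51 \<sigma> \<mu> (Complex t1 t2)) + pi*t1*b^2 \<le> - 2*X"
      by linarith
    then have "Re (f51 \<sigma> \<mu> (Complex t1 t2)) + pi*t1*b^2 \<le> - (2*pi*\<delta>) * \<bar>t1\<bar>"
      by (simp add: X_def)
    then have "(Re (f51 \<sigma> \<mu> (Complex t1 t2)) + pi*t1*b^2) / b^2 \<le> - (2*pi*\<delta>) * \<bar>t1\<bar> / b^2"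
      by (intro divide_right_mono) auto
    then have "Re (f51 \<sigma> \<mu> (Complex t1 t2)) / b^2 + pi * (t1 - \<mu>) \<le> - pi*\<mu> + - (2*pi*\<delta> / b^2) * \<bar>t1\<bar>"
      using b by (simp add: add_divide_distrib right_diff_distrib)
    then show "norm (exp (f51 \<sigma> \<mu> (Complex t1 t2) / complex_of_real (b^2)) * g51 \<mu> (Complex t1 t2))
                 \<le> exp (- pi*\<mu>) * exp (- (2*pi*\<delta> / b^2) * \<bar>t1\<bar>)"
      unfolding norm_exp_div_mult_g51 mult_exp_exp by simp
  qed (use assms in auto)
qed

end
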